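(* Let $k\ge 2$ be a constant integer. Deterministically, the random $k$-tree $G(n)$ has vertex expansion $\alpha(G(n))=\mathcal{O}(k/n)$, and with probability $1-o(1)$ as $n\to\infty$ its conductance satisfies $\Phi(G(n))=\mathcal{O}(\log n\cdot n^{-1/k})$.
   Context: Random $k$-tree process: $G(0)$ is a clique on $k$ vertices; for $t\ge1$, $G(t)$ is obtained from $G(t-1)$ by choosing a $k$-clique of $G(t-1)$ uniformly at random, creating a new vertex, and joining it to all vertices of the chosen clique. Vertex expansion: $\alpha(G)=\min\{|\partial S|/|S| : S\subseteq V(G),\ 0<|S|\le |V(G)|/2\}$, where $\partial S$ is the set of vertices outside $S$ with a neighbor in $S$. Conductance: $\Phi(G)=\min\{e(S,V(G)\setminus S)/\mathrm{vol}(S): S\subseteq V(G),\ 0<\mathrm{vol}(S)\le \mathrm{vol}(V(G))/2\}$, where $e(S,V(G)\setminus S)$ is the number of edges between $S$ and its complement and $\mathrm{vol}(S)=\sum_{u\in S}\deg(u)$. *)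

theory Defs
  imports "HOL-Probability.Probability"
begin

text \<open>Simple graphs on natural-number vertices: a vertex set V and an edge set E
  of two-element sets.\<close>

definition boundary :: "nat set \<Rightarrow> nat set set \<Rightarrow> nat set \<Rightarrow> nat set" where
  "boundary V E S = {v \<in> V - S. \<exists>u\<in>S. {u, v} \<in> E}"

definition vertex_expansion :: "nat set \<Rightarrow> nat set set \<Rightarrow> real" where
  "vertex_expansion V E =
     Min {real (card (boundary V E S)) / real (card S) | S.
            S \<subseteq> V \<and> 0 < card S \<and> real (card S) \<le> real (card V) / 2}"

definition degree :: "nat set \<Rightarrow> nat set set \<Rightarrow> nat \<Rightarrow> nat" where
  "degree V E v = card {u \<in> V. {u, v} \<in> E}"

definition vol :: "nat set \<Rightarrow> nat set set \<Rightarrow> nat set \<Rightarrow> nat" where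
  "vol V E S = (\<Sum>u\<in>S. degree V E u)"

definition cut_edges :: "nat set \<Rightarrow> nat set set \<Rightarrow> nat set \<Rightarrow> nat" where
  "cut_edges V E S = card {e \<in> E. \<exists>u\<in>S. \<exists>w\<in>V - S. e = {u, w}}"

definition conductance :: "nat set \<Rightarrow> nat set set \<Rightarrow> real" where
  "conductance V E =
     Min {real (cut_edges V E S) / real (vol V E S) | S.
            S \<subseteq> V \<and> 0 < vol V E S \<and> real (vol V E S) \<le> real (vol V E V) / 2}"

definition kcliques :: "nat \<Rightarrow> nat set \<Rightarrow> nat set set \<Rightarrow> nat set set" where
  "kcliques k V E = {C. C \<subseteq> V \<and> card C = k \<and> (\<forall>x\<in>C. \<forall>y\<in>C. x \<noteq> y \<longrightarrow> {x, y} \<in> E)}"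

text \<open>Vertex set of G(t): {0,...,k+t-1}; vertex k+t is the vertex added at step t+1.\<close>
definition ktree_vertices :: "nat \<Rightarrow> nat \<Rightarrow> nat set" where
  "ktree_vertices k t = {0..<k + t}"

fun random_ktree :: "nat \<Rightarrow> nat \<Rightarrow> nat set set pmf" where
  "random_ktree k 0 = return_pmf {{x, y} | x y. x < k \<and> y < k \<and> x \<noteq> y}"
| "random_ktree k (Suc t) =
     bind_pmf (random_ktree k t) (\<lambda>E.
       map_pmf (\<lambda>C. E \<union> {{k + t, c} | c. c \<in> C})
         (pmf_of_set (kcliques k (ktree_vertices k t) E)))"

end

(*
  The random k-tree is a k-tree: every vertex v added after the initial clique is joined to a
  k-clique of earlier vertices, its lower neighbours, the largest of which we call its parent.
  The lower neighbours of v form a clique, so all of them except the parent are lower neighbours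
  of the parent; consequently every edge leaving the subtree of the parent forest rooted at x
  ends in a lower neighbour of x. A centroid argument then yields, for any vertex weights none of
  which is too large, a union of subtrees carrying between a quarter and a half of the total
  weight whose boundary has at most k + 1 vertices. With unit weights this bounds the vertex
  expansion by O(k/n); with degree weights it bounds the conductance by O(M/n) whenever all
  degrees are at most M.

  For the degrees, let X(w) be the number of k-cliques containing w. The degree of w is at most
  (k - 1) X(w), and attaching a new vertex to a uniformly random k-clique increases the
  potential sum_w X(w)^2 in expectation by the factor 1 + 2(k - 1)/(1 + k t) plus a constant.
  Solving this recurrence gives an expected potential of O(n^(2 - 2/k) log n), and Markov's
  inequality shows that all degrees are at most ln n * n^(1 - 1/k) with probability 1 - o(1).
*)

theory Submission
  imports Defs
begin

section \<open>Random \<open>k\<close>-trees are \<open>k\<close>-trees\<close>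

definition lower_nbrs :: "nat set set \<Rightarrow> nat \<Rightarrow> nat set" where
  "lower_nbrs E v = {u. u < v \<and> {u, v} \<in> E}"

definition star_edges :: "nat \<Rightarrow> nat set \<Rightarrow> nat set set" where
  "star_edges v C = {{v, c} | c. c \<in> C}"

lemma random_ktree_Suc_star:
  "random_ktree k (Suc t) = bind_pmf (random_ktree k t) (\<lambda>E.
     map_pmf (\<lambda>C. E \<union> star_edges (k + t) C) (pmf_of_set (kcliques k (ktree_vertices k t) E)))"
  by (simp add: random_ktree.simps star_edges_def)

declare random_ktree.simps [simp del]

lemma finite_ktree_vertices [simp]: "finite (ktree_vertices k t)"
  by (simp add: ktree_vertices_def)

lemma finite_kcliques: "finite V \<Longrightarrow> finite (kcliques k V E)"
  by (rule finite_subset[of _ "Pow V"]) (auto simp: kcliques_def)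

lemma kcliques_ktree_verticesD:
  assumes "Q \<in> kcliques k (ktree_vertices k t) E"
  shows "Q \<subseteq> {0..<k + t}" "finite Q" "card Q = k"
    and "x \<in> Q \<Longrightarrow> y \<in> Q \<Longrightarrow> x \<noteq> y \<Longrightarrow> {x, y} \<in> E"
  using assms finite_subset[of Q "{0..<k + t}"] by (auto simp: kcliques_def ktree_vertices_def)

lemma inj_on_insert_Diff_singleton:
  assumes "v \<notin> C"
  shows "inj_on (\<lambda>c. insert v (C - {c})) C"
proof (rule inj_onI)
  fix a b assume "a \<in> C" "b \<in> C" "insert v (C - {a}) = insert v (C - {b})"
  then have "C - {a} = C - {b}"
    using assms by (metis Diff_iff insertCI insert_Diff_single insert_absorb insert_ident)
  then show "a = b" using \<open>a \<in> C\<close> \<open>b \<in> C\<close> by blast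
qed

lemma subset_card_Suc_eq_Diff_singleton:
  assumes "finite C" "A \<subseteq> C" "Suc (card A) = card C"
  obtains c where "c \<in> C" "A = C - {c}"
proof -
  have "A \<noteq> C" using assms(3) by auto
  then obtain c where c: "c \<in> C" "c \<notin> A" using assms(2) by blast
  have "A \<subseteq> C - {c}" using assms(2) c(2) by blast
  moreover have "card (C - {c}) = card A" using assms c(1) by simp
  ultimately have "A = C - {c}" using assms(1) by (intro card_subset_eq) auto
  with c(1) show thesis by (rule that)
qed

locale ktree =
  fixes k t :: nat and E :: "nat set set"
  assumes k_pos: "1 \<le> k"
    and edge_bounds: "{a, b} \<in> E \<Longrightarrow> a \<noteq> b \<and> a < k + t \<and> b < k + t"
    and root_clique: "a < k \<Longrightarrow> b < k \<Longrightarrow> a \<noteq> b \<Longrightarrow> {a, b} \<in> E"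
    and card_lower_nbrs: "k \<le> v \<Longrightarrow> v < k + t \<Longrightarrow> card (lower_nbrs E v) = k"
    and lower_nbrs_clique: "k \<le> v \<Longrightarrow> v < k + t \<Longrightarrow> a \<in> lower_nbrs E v \<Longrightarrow> b \<in> lower_nbrs E v
      \<Longrightarrow> a \<noteq> b \<Longrightarrow> {a, b} \<in> E"
    and card_cliques: "card (kcliques k (ktree_vertices k t) E) = 1 + k * t"
begin

abbreviation cliques :: "nat set set" where
  "cliques \<equiv> kcliques k (ktree_vertices k t) E"

lemma finite_cliques: "finite cliques"
  by (simp add: finite_kcliques)

lemma cliques_nonempty: "cliques \<noteq> {}"
  using card_cliques by auto

lemma finite_lower_nbrs: "finite (lower_nbrs E v)"
  by (rule finite_subset[of _ "{..<v}"]) (auto simp: lower_nbrs_def)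

lemma root_in_cliques: "{0..<k} \<in> cliques"
  using root_clique by (auto simp: kcliques_def ktree_vertices_def)

lemma lower_nbrs_extend:
  assumes "C \<subseteq> {0..<k + t}"
    and "v \<le> k + t"
  shows "lower_nbrs (E \<union> star_edges (k + t) C) v = (if v = k + t then C else lower_nbrs E v)"
proof -
  have "{u, k + t} \<notin> E" for u
    using edge_bounds[of u "k + t"] by blast
  then show ?thesis
    using assms by (auto simp: lower_nbrs_def star_edges_def doubleton_eq_iff)
qed

lemma kcliques_extend_cases:
  assumes C: "C \<in> cliques"
    and Q: "Q \<in> kcliques k (ktree_vertices k (Suc t)) (E \<union> star_edges (k + t) C)"
  shows "Q \<in> cliques \<or> (\<exists>c\<in>C. Q = insert (k + t) (C - {c}))"
proof (cases "k + t \<in> Q")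
  case False
  have "{x, y} \<notin> star_edges (k + t) C" if "x \<in> Q" "y \<in> Q" for x y
    using that False by (auto simp: star_edges_def doubleton_eq_iff)
  then show ?thesis
    using Q False by (fastforce simp: kcliques_def ktree_vertices_def less_Suc_eq)
next
  case True
  have CV: "C \<subseteq> {0..<k + t}" "finite C" "card C = k"
    using kcliques_ktree_verticesD[OF C] by auto
  have "Q - {k + t} \<subseteq> lower_nbrs (E \<union> star_edges (k + t) C) (k + t)"
    using kcliques_ktree_verticesD[OF Q] True by (auto simp: lower_nbrs_def insert_commute)
  then have "Q - {k + t} \<subseteq> C"
    using lower_nbrs_extend[OF CV(1)] by simp
  moreover have "Suc (card (Q - {k + t})) = card C"
    using True kcliques_ktree_verticesD[OF Q] CV k_pos by (simp add: card_Diff_singleton)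
  ultimately obtain c where "c \<in> C" "Q - {k + t} = C - {c}"
    using CV(2) subset_card_Suc_eq_Diff_singleton by metis
  then show ?thesis using True by blast
qed

lemma insert_Diff_in_kcliques_extend:
  assumes C: "C \<in> cliques" and c: "c \<in> C"
  shows "insert (k + t) (C - {c})
    \<in> kcliques k (ktree_vertices k (Suc t)) (E \<union> star_edges (k + t) C)"
proof -
  have CV: "C \<subseteq> {0..<k + t}" "finite C" "card C = k"
    using kcliques_ktree_verticesD[OF C] by auto
  have "k + t \<notin> C - {c}" using CV(1) by auto
  then have "card (insert (k + t) (C - {c})) = k"
    using c CV k_pos by (simp add: card_Diff_singleton)
  moreover have "insert (k + t) (C - {c}) \<subseteq> {0..<k + Suc t}" using CV(1) by auto
  moreover have "{x, y} \<in> E \<union> star_edges (k + t) C"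
    if "x \<in> insert (k + t) (C - {c})" "y \<in> insert (k + t) (C - {c})" "x \<noteq> y" for x y
    using that kcliques_ktree_verticesD(4)[OF C] by (auto simp: star_edges_def insert_commute)
  ultimately show ?thesis by (simp add: kcliques_def ktree_vertices_def)
qed

lemma kcliques_extend:
  assumes C: "C \<in> cliques"
  shows "kcliques k (ktree_vertices k (Suc t)) (E \<union> star_edges (k + t) C) =
         cliques \<union> (\<lambda>c. insert (k + t) (C - {c})) ` C"
proof (intro equalityI subsetI)
  fix Q assume "Q \<in> cliques \<union> (\<lambda>c. insert (k + t) (C - {c})) ` C"
  then consider "Q \<in> cliques" | c where "c \<in> C" "Q = insert (k + t) (C - {c})" by blast
  then show "Q \<in> kcliques k (ktree_vertices k (Suc t)) (E \<union> star_edges (k + t) C)"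
  proof cases
    case 1
    then show ?thesis by (auto simp: kcliques_def ktree_vertices_def)
  qed (simp add: insert_Diff_in_kcliques_extend[OF C])
qed (use kcliques_extend_cases[OF C] in blast)

lemma card_kcliques_extend:
  assumes C: "C \<in> cliques"
  shows "card (kcliques k (ktree_vertices k (Suc t)) (E \<union> star_edges (k + t) C)) = 1 + k * Suc t"
proof -
  have CV: "C \<subseteq> {0..<k + t}" "card C = k"
    using kcliques_ktree_verticesD[OF C] by auto
  have "cliques \<inter> (\<lambda>c. insert (k + t) (C - {c})) ` C = {}"
    by (auto simp: kcliques_def ktree_vertices_def)
  moreover have "card ((\<lambda>c. insert (k + t) (C - {c})) ` C) = k"
    using CV by (subst card_image) (auto intro: inj_on_insert_Diff_singleton)
  ultimately show ?thesis
    unfolding kcliques_extend[OF C] using card_cliques finite_cliques CV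
    by (subst card_Un_disjoint) (auto intro: finite_subset)
qed

lemma ktree_extend:
  assumes C: "C \<in> cliques"
  shows "ktree k (Suc t) (E \<union> star_edges (k + t) C)"
proof
  have CV: "C \<subseteq> {0..<k + t}" "card C = k"
    using kcliques_ktree_verticesD[OF C] by auto
  note lower = lower_nbrs_extend[OF CV(1)]
  fix a b v
  show "card (lower_nbrs (E \<union> star_edges (k + t) C) v) = k" if "k \<le> v" "v < k + Suc t"
    using that lower card_lower_nbrs CV(2) by simp
  show "{a, b} \<in> E \<union> star_edges (k + t) C"
    if "k \<le> v" "v < k + Suc t" "a \<in> lower_nbrs (E \<union> star_edges (k + t) C) v"
      "b \<in> lower_nbrs (E \<union> star_edges (k + t) C) v" "a \<noteq> b"
    using that lower lower_nbrs_clique kcliques_ktree_verticesD(4)[OF C]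
    by (cases "v = k + t") auto
  show "a \<noteq> b \<and> a < k + Suc t \<and> b < k + Suc t" if ab: "{a, b} \<in> E \<union> star_edges (k + t) C"
  proof -
    consider "{a, b} \<in> E" | c where "c \<in> C" "{a, b} = {k + t, c}"
      using ab by (auto simp: star_edges_def)
    then show ?thesis
    proof cases
      case (2 c)
      then have "c < k + t" using CV(1) by auto
      with 2(2) show ?thesis by (auto simp: doubleton_eq_iff)
    qed (use edge_bounds[of a b] in simp)
  qed
qed (use k_pos root_clique card_kcliques_extend[OF C] in auto)

end

definition complete_edges :: "nat \<Rightarrow> nat set set" where
  "complete_edges k = {{x, y} | x y. x < k \<and> y < k \<and> x \<noteq> y}"

lemma random_ktree_0: "random_ktree k 0 = return_pmf (complete_edges k)"
  by (simp add: random_ktree.simps complete_edges_def)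

lemma kcliques_complete_edges: "kcliques k (ktree_vertices k 0) (complete_edges k) = {{0..<k}}"
proof (intro equalityI subsetI)
  fix Q assume "Q \<in> kcliques k (ktree_vertices k 0) (complete_edges k)"
  then show "Q \<in> {{0..<k}}"
    by (simp add: card_subset_eq kcliques_def ktree_vertices_def)
next
  fix Q assume "Q \<in> {{0..<k}}"
  then show "Q \<in> kcliques k (ktree_vertices k 0) (complete_edges k)"
    unfolding kcliques_def ktree_vertices_def complete_edges_def by auto blast
qed

lemma ktree_initial:
  assumes "1 \<le> k"
  shows "ktree k 0 (complete_edges k)"
proof
  fix a b assume "{a, b} \<in> complete_edges k"
  then obtain x y where "{a, b} = {x, y}" "x < k" "y < k" "x \<noteq> y"
    by (auto simp: complete_edges_def)
  then show "a \<noteq> b \<and> a < k + 0 \<and> b < k + 0" by (auto simp: doubleton_eq_iff)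
qed (use assms kcliques_complete_edges in \<open>auto simp: complete_edges_def\<close>)

lemma ktree_random_ktree:
  assumes "1 \<le> k" "E \<in> set_pmf (random_ktree k t)"
  shows "ktree k t E"
  using assms(2)
proof (induction t arbitrary: E)
  case 0
  then show ?case using ktree_initial[OF assms(1)] by (simp add: random_ktree_0)
next
  case (Suc t)
  then obtain E0 C where "E0 \<in> set_pmf (random_ktree k t)" "ktree k t E0"
    "C \<in> kcliques k (ktree_vertices k t) E0" "E = E0 \<union> star_edges (k + t) C"
    by (auto simp: random_ktree_Suc_star ktree.finite_cliques ktree.cliques_nonempty)
  then show ?case by (blast intro: ktree.ktree_extend)
qed

lemma set_pmf_random_ktree_Suc:
  assumes "1 \<le> k"
  shows "set_pmf (random_ktree k (Suc t)) = (\<Union>E\<in>set_pmf (random_ktree k t).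
           (\<lambda>C. E \<union> star_edges (k + t) C) ` kcliques k (ktree_vertices k t) E)"
  using ktree_random_ktree[OF assms] ktree.finite_cliques ktree.cliques_nonempty
  by (auto simp: random_ktree_Suc_star)

lemma finite_set_pmf_random_ktree:
  assumes "1 \<le> k"
  shows "finite (set_pmf (random_ktree k t))"
  by (induction t) (simp_all add: random_ktree_0 set_pmf_random_ktree_Suc[OF assms] finite_kcliques)

section \<open>The clique potential\<close>

definition clique_count :: "nat \<Rightarrow> nat \<Rightarrow> nat set set \<Rightarrow> nat \<Rightarrow> nat" where
  "clique_count k t E w = card {Q \<in> kcliques k (ktree_vertices k t) E. w \<in> Q}"

definition clique_potential :: "nat \<Rightarrow> nat \<Rightarrow> nat set set \<Rightarrow> real" where
  "clique_potential k t E = (\<Sum>w\<in>{0..<k + t}. real (clique_count k t E w) ^ 2)"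

lemma clique_potential_nonneg: "0 \<le> clique_potential k t E"
  by (simp add: clique_potential_def sum_nonneg)

lemma sum_card_containing:
  assumes "finite A" "finite W" "\<And>C. C \<in> A \<Longrightarrow> C \<subseteq> W"
  shows "(\<Sum>w\<in>W. real (card {C \<in> A. w \<in> C}) * f w) = (\<Sum>C\<in>A. \<Sum>w\<in>C. f w)"
proof -
  have "(\<Sum>w\<in>W. real (card {C \<in> A. w \<in> C}) * f w) = (\<Sum>w\<in>W. \<Sum>C\<in>A. if w \<in> C then f w else 0)"
    using assms(1) by (simp add: sum.If_cases Int_def)
  also have "\<dots> = (\<Sum>C\<in>A. \<Sum>w\<in>W. if w \<in> C then f w else 0)"
    by (rule sum.swap)
  also have "\<dots> = (\<Sum>C\<in>A. \<Sum>w\<in>C. f w)"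
  proof (rule sum.cong[OF refl])
    fix C assume "C \<in> A"
    then show "(\<Sum>w\<in>W. if w \<in> C then f w else 0) = (\<Sum>w\<in>C. f w)"
      using assms(2,3) by (simp add: sum.If_cases Int_absorb1)
  qed
  finally show ?thesis .
qed

context ktree
begin

lemma clique_count_extend:
  assumes C: "C \<in> cliques" and w: "w < k + t"
  shows "clique_count k (Suc t) (E \<union> star_edges (k + t) C) w =
         clique_count k t E w + (if w \<in> C then k - 1 else 0)"
proof -
  let ?g = "\<lambda>c. insert (k + t) (C - {c})"
  have CV: "C \<subseteq> {0..<k + t}" "finite C" "card C = k"
    using kcliques_ktree_verticesD[OF C] by auto
  have "{Q \<in> cliques \<union> ?g ` C. w \<in> Q} = {Q \<in> cliques. w \<in> Q} \<union> ?g ` {c \<in> C. w \<in> C - {c}}"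
    using w by auto
  moreover have "{Q \<in> cliques. w \<in> Q} \<inter> ?g ` {c \<in> C. w \<in> C - {c}} = {}"
    by (auto simp: kcliques_def ktree_vertices_def)
  moreover have "card (?g ` {c \<in> C. w \<in> C - {c}}) = card {c \<in> C. w \<in> C - {c}}"
    using CV by (intro card_image inj_on_subset[OF inj_on_insert_Diff_singleton]) auto
  moreover have "card {c \<in> C. w \<in> C - {c}} = (if w \<in> C then k - 1 else 0)"
  proof -
    have "{c \<in> C. w \<in> C - {c}} = (if w \<in> C then C - {w} else {})" by auto
    then show ?thesis using CV by simp
  qed
  ultimately show ?thesis
    unfolding clique_count_def kcliques_extend[OF C] using finite_cliques CV(2)
    by (simp add: card_Un_disjoint)
qed

lemma clique_count_extend_new:
  assumes C: "C \<in> cliques"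
  shows "clique_count k (Suc t) (E \<union> star_edges (k + t) C) (k + t) = k"
proof -
  have CV: "C \<subseteq> {0..<k + t}" "card C = k"
    using kcliques_ktree_verticesD[OF C] by auto
  then have "inj_on (\<lambda>c. insert (k + t) (C - {c})) C"
    by (intro inj_on_insert_Diff_singleton) auto
  moreover have "{Q \<in> cliques \<union> (\<lambda>c. insert (k + t) (C - {c})) ` C. k + t \<in> Q} =
        (\<lambda>c. insert (k + t) (C - {c})) ` C"
    by (auto simp: kcliques_def ktree_vertices_def)
  ultimately show ?thesis
    unfolding clique_count_def kcliques_extend[OF C] using CV by (simp add: card_image)
qed

lemma clique_potential_extend:
  assumes C: "C \<in> cliques"
  shows "clique_potential k (Suc t) (E \<union> star_edges (k + t) C) = clique_potential k t E
    + (\<Sum>w\<in>C. 2 * (real k - 1) * real (clique_count k t E w) + (real k - 1) ^ 2) + real k ^ 2"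
proof -
  let ?X = "\<lambda>w. real (clique_count k t E w)"
  let ?X' = "\<lambda>w. real (clique_count k (Suc t) (E \<union> star_edges (k + t) C) w)"
  have CV: "C \<subseteq> {0..<k + t}" using kcliques_ktree_verticesD[OF C] by auto
  have "?X' w ^ 2 = ?X w ^ 2 + (if w \<in> C then 2 * (real k - 1) * ?X w + (real k - 1) ^ 2 else 0)"
    if "w < k + t" for w
    using clique_count_extend[OF C that] k_pos
    by (simp add: of_nat_diff power2_eq_square algebra_simps)
  then have "(\<Sum>w\<in>{0..<k + t}. ?X' w ^ 2) = clique_potential k t E
      + (\<Sum>w\<in>{0..<k + t}. if w \<in> C then 2 * (real k - 1) * ?X w + (real k - 1) ^ 2 else 0)"
    by (simp add: clique_potential_def sum.distrib)
  also have "(\<Sum>w\<in>{0..<k + t}. if w \<in> C then 2 * (real k - 1) * ?X w + (real k - 1) ^ 2 else 0)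
      = (\<Sum>w\<in>C. 2 * (real k - 1) * ?X w + (real k - 1) ^ 2)"
    using CV by (simp add: sum.If_cases Int_absorb1)
  finally show ?thesis
    by (simp add: clique_potential_def clique_count_extend_new[OF C])
qed

lemma sum_clique_potential_extend:
  "(\<Sum>C\<in>cliques. clique_potential k (Suc t) (E \<union> star_edges (k + t) C)) =
     (1 + real k * real t + 2 * (real k - 1)) * clique_potential k t E
     + (1 + real k * real t) * (real k * (real k - 1) ^ 2 + real k ^ 2)"
proof -
  let ?X = "\<lambda>w. real (clique_count k t E w)"
  let ?N = "real (card cliques)"
  have sub: "\<And>C. C \<in> cliques \<Longrightarrow> C \<subseteq> {0..<k + t}"
    using kcliques_ktree_verticesD by blast
  have double_count: "(\<Sum>C\<in>cliques. \<Sum>w\<in>C. f w) = (\<Sum>w\<in>{0..<k + t}. ?X w * f w)" for f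
    using sum_card_containing[OF finite_cliques _ sub] by (simp add: clique_count_def)
  have affine: "(\<Sum>C\<in>cliques. \<Sum>w\<in>C. a * ?X w + b)
      = a * clique_potential k t E + b * (\<Sum>C\<in>cliques. \<Sum>w\<in>C. 1)" for a b
  proof -
    have "?X w * (a * ?X w + b) = a * ?X w ^ 2 + b * (?X w * 1)" for w
      by (simp add: power2_eq_square algebra_simps)
    then show ?thesis
      unfolding double_count by (simp add: clique_potential_def sum.distrib sum_distrib_left)
  qed
  have ones: "(\<Sum>C\<in>cliques. \<Sum>w\<in>C. 1 :: real) = real k * ?N"
    using kcliques_ktree_verticesD by simp
  have "(\<Sum>C\<in>cliques. clique_potential k (Suc t) (E \<union> star_edges (k + t) C)) =
      ?N * clique_potential k t E
      + (\<Sum>C\<in>cliques. \<Sum>w\<in>C. 2 * (real k - 1) * ?X w + (real k - 1) ^ 2) + ?N * real k ^ 2"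
    by (subst sum.cong[OF refl clique_potential_extend]) (simp_all add: sum.distrib)
  also have "(\<Sum>C\<in>cliques. \<Sum>w\<in>C. 2 * (real k - 1) * ?X w + (real k - 1) ^ 2) =
      2 * (real k - 1) * clique_potential k t E + (real k - 1) ^ 2 * (real k * ?N)"
    by (simp only: affine ones)
  finally show ?thesis
    using card_cliques by (simp add: algebra_simps)
qed

end

lemma expectation_clique_potential_Suc:
  assumes k: "1 \<le> k"
  shows "measure_pmf.expectation (random_ktree k (Suc t)) (clique_potential k (Suc t)) =
     (1 + 2 * (real k - 1) / (1 + real k * real t)) *
       measure_pmf.expectation (random_ktree k t) (clique_potential k t)
     + (real k * (real k - 1) ^ 2 + real k ^ 2)"
proof -
  let ?p = "random_ktree k t"
  define c where "c = 1 + 2 * (real k - 1) / (1 + real k * real t)"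
  define D where "D = real k * (real k - 1) ^ 2 + real k ^ 2"
  have fin: "finite (set_pmf ?p)" by (rule finite_set_pmf_random_ktree[OF k])
  let ?step = "\<lambda>E. map_pmf (\<lambda>C. E \<union> star_edges (k + t) C)
    (pmf_of_set (kcliques k (ktree_vertices k t) E))"
  have step: "finite (set_pmf (?step E)) \<and>
      measure_pmf.expectation (?step E) (clique_potential k (Suc t))
        = c * clique_potential k t E + D"
    if "E \<in> set_pmf ?p" for E
  proof -
    interpret ktree k t E using ktree_random_ktree[OF k that] .
    have N: "real (card cliques) = 1 + real k * real t" using card_cliques by simp
    have "1 + real k * real t > 0" by (simp add: add_pos_nonneg)
    then show ?thesis
      using cliques_nonempty finite_cliques
      by (simp add: integral_pmf_of_set sum_clique_potential_extend N c_def D_def field_simps)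
  qed
  have "measure_pmf.expectation (random_ktree k (Suc t)) (clique_potential k (Suc t)) =
      (\<Sum>E\<in>set_pmf ?p. pmf ?p E * (c * clique_potential k t E + D))"
    unfolding random_ktree_Suc_star using step
    by (subst pmf_expectation_bind[OF fin]) auto
  also have "\<dots> = c * (\<Sum>E\<in>set_pmf ?p. clique_potential k t E * pmf ?p E)
      + D * (\<Sum>E\<in>set_pmf ?p. pmf ?p E)"
    by (simp add: sum.distrib sum_distrib_left algebra_simps)
  also have "(\<Sum>E\<in>set_pmf ?p. pmf ?p E) = 1"
    using fin by (rule sum_pmf_eq_1) simp
  also have "(\<Sum>E\<in>set_pmf ?p. clique_potential k t E * pmf ?p E) =
      measure_pmf.expectation ?p (clique_potential k t)"
    using fin by (rule integral_measure_pmf_real[symmetric]) auto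
  finally show ?thesis by (simp add: c_def D_def)
qed

lemma expectation_clique_potential_0:
  "measure_pmf.expectation (random_ktree k 0) (clique_potential k 0) = real k"
proof -
  have "{Q \<in> {{0..<k}}. w \<in> Q} = {{0..<k}}" if "w < k" for w
    using that by auto
  then have "clique_count k 0 (complete_edges k) w = 1" if "w < k" for w
    using that by (simp add: clique_count_def kcliques_complete_edges)
  then show ?thesis by (simp add: random_ktree_0 clique_potential_def)
qed

section \<open>Solving the recurrence\<close>

lemma Bernoulli_inequality_powr:
  fixes x b :: real
  assumes "0 \<le> x" "1 \<le> b"
  shows "1 + b * x \<le> (1 + x) powr b"
proof -
  let ?a = "(1 + x) powr b"
  have "?a powr (1 / b) * 1 powr (1 - 1 / b) \<le> (1 / b) * ?a + (1 - 1 / b) * 1"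
    using assms by (intro Youngs_inequality_0) auto
  moreover have "?a powr (1 / b) = 1 + x"
    using assms by (simp add: powr_powr)
  ultimately have "b * (1 + x) \<le> b * (?a / b + 1 - 1 / b)"
    using assms by (intro mult_left_mono) auto
  also have "\<dots> = ?a + b - 1"
    using assms by (simp add: field_simps)
  finally show ?thesis by (simp add: algebra_simps)
qed

lemma inverse_Suc_le_ln_Suc_divide:
  fixes s :: real
  assumes "0 < s"
  shows "1 / (s + 1) \<le> ln ((s + 1) / s)"
proof -
  have "ln (s / (s + 1)) \<le> s / (s + 1) - 1"
    using assms by (intro ln_le_minus_one) auto
  moreover have "ln (s / (s + 1)) = - ln ((s + 1) / s)"
    using assms by (simp add: ln_div)
  moreover have "s / (s + 1) - 1 = - (1 / (s + 1))"
    using assms by (simp add: field_simps)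
  ultimately show ?thesis by simp
qed

text \<open>One step of the recurrence: the growth factor \<open>1 + \<beta> / s\<close> is absorbed by
  \<open>s powr \<beta>\<close> (Bernoulli), and the additive term by the increase of the logarithm.\<close>

lemma powr_ln_recurrence_step:
  fixes s \<beta> A D G x :: real
  assumes s: "0 < s" and \<beta>: "1 \<le> \<beta>" and A: "0 \<le> A" "D \<le> A" and G: "0 \<le> G"
    and x: "x \<le> A * s powr \<beta> * G"
  shows "(1 + \<beta> / s) * x + D \<le> A * (s + 1) powr \<beta> * (G + ln ((s + 1) / s))"
proof -
  have bernoulli: "s powr \<beta> * (1 + \<beta> / s) \<le> (s + 1) powr \<beta>"
  proof -
    have "1 + \<beta> * (1 / s) \<le> (1 + 1 / s) powr \<beta>"
      using s \<beta> by (intro Bernoulli_inequality_powr) auto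
    also have "\<dots> = (s + 1) powr \<beta> / s powr \<beta>"
      using s by (simp add: field_simps powr_divide)
    finally show ?thesis using s by (simp add: field_simps)
  qed
  have D: "D \<le> A * (s + 1) powr \<beta> * ln ((s + 1) / s)"
  proof -
    have "1 \<le> (s + 1) powr (\<beta> - 1)"
      using s \<beta> by (intro ge_one_powr_ge_zero) auto
    also have "\<dots> = (s + 1) powr \<beta> * (1 / (s + 1))"
      using s by (simp add: powr_diff)
    also have "\<dots> \<le> (s + 1) powr \<beta> * ln ((s + 1) / s)"
      using s by (intro mult_left_mono inverse_Suc_le_ln_Suc_divide) auto
    finally have "A * 1 \<le> A * ((s + 1) powr \<beta> * ln ((s + 1) / s))"
      using A(1) by (rule mult_left_mono)
    then show ?thesis using A(2) by (simp add: mult.assoc)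
  qed
  have "(1 + \<beta> / s) * x \<le> (1 + \<beta> / s) * (A * s powr \<beta> * G)"
    using x s \<beta> by (intro mult_left_mono) auto
  also have "\<dots> \<le> A * (s + 1) powr \<beta> * G"
    using mult_left_mono[OF bernoulli, of "A * G"] A G by (simp add: algebra_simps)
  finally show ?thesis
    using D by (simp add: distrib_left)
qed

lemma recurrence_powr_ln_bound:
  fixes e :: "nat \<Rightarrow> real" and s0 \<beta> A D :: real
  assumes s0: "0 < s0" and \<beta>: "1 \<le> \<beta>" and A: "0 \<le> A" "D \<le> A"
    and e0: "e 0 \<le> A * s0 powr \<beta>"
    and e_Suc: "\<And>t. e (Suc t) = (1 + \<beta> / (real t + s0)) * e t + D"
  shows "e t \<le> A * (real t + s0) powr \<beta> * (1 + ln ((real t + s0) / s0))"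
proof (induction t)
  case 0
  then show ?case using e0 s0 by simp
next
  case (Suc t)
  define s where "s = real t + s0"
  have s: "0 < s" "s0 \<le> s" using s0 by (simp_all add: s_def add_nonneg_pos)
  have "1 + ln ((real (Suc t) + s0) / s0) = (1 + ln (s / s0)) + ln ((s + 1) / s)"
    using s s0 by (simp add: s_def ln_div algebra_simps)
  moreover have "e (Suc t) \<le> A * (s + 1) powr \<beta> * ((1 + ln (s / s0)) + ln ((s + 1) / s))"
    unfolding e_Suc s_def[symmetric] using s s0 \<beta> A Suc.IH
    by (intro powr_ln_recurrence_step) (auto simp: s_def)
  ultimately show ?case by (simp add: s_def add_ac)
qed

text \<open>With \<open>s0 = 1 / k\<close> and \<open>\<beta> = 2 - 2 / k\<close> the growth factor of the expected potential is
  \<open>1 + \<beta> / (t + s0)\<close>, and \<open>A = k\<^sup>3\<close> dominates both its initial value \<open>k\<close> and the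
  additive constant.\<close>

lemma expectation_clique_potential_le:
  assumes k: "2 \<le> k"
  shows "measure_pmf.expectation (random_ktree k n) (clique_potential k n) \<le>
    real k ^ 3 * (real n + 1 / real k) powr (2 - 2 / real k) * (1 + ln (real k * real n + 1))"
proof -
  let ?\<beta> = "2 - 2 / real k"
  have kpos: "0 < real k" using k by simp
  have \<beta>: "1 \<le> ?\<beta>" "?\<beta> \<le> 2" using k by (auto simp: field_simps)
  have "real k * (real k - 1) ^ 2 + real k ^ 2 \<le> real k ^ 3"
    using k by (simp add: power2_eq_square power3_eq_cube algebra_simps mult_left_mono)
  moreover have "real k \<le> real k ^ 3 * (1 / real k) powr ?\<beta>"
  proof -
    have "(1 / real k) powr 2 \<le> (1 / real k) powr ?\<beta>"
      using k \<beta> by (intro powr_mono') auto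
    then have "real k ^ 3 * (1 / real k) ^ 2 \<le> real k ^ 3 * (1 / real k) powr ?\<beta>"
      using kpos by (simp add: powr_realpow)
    then show ?thesis using kpos by (simp add: power2_eq_square power3_eq_cube)
  qed
  moreover have "1 + 2 * (real k - 1) / (1 + real k * real t) = 1 + ?\<beta> / (real t + 1 / real k)"
    for t
  proof -
    have "real t + 1 / real k = (1 + real k * real t) / real k"
      and "?\<beta> = 2 * (real k - 1) / real k"
      using kpos by (simp_all add: field_simps)
    then show ?thesis using kpos by simp
  qed
  ultimately have "measure_pmf.expectation (random_ktree k n) (clique_potential k n) \<le>
      real k ^ 3 * (real n + 1 / real k) powr ?\<beta> * (1 + ln ((real n + 1 / real k) / (1 / real k)))"
    using k kpos expectation_clique_potential_0[of k] expectation_clique_potential_Suc[of k]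
    by (intro recurrence_powr_ln_bound[where D = "real k * (real k - 1) ^ 2 + real k ^ 2"]) auto
  also have "(real n + 1 / real k) / (1 / real k) = real k * real n + 1"
    using kpos by (simp add: field_simps)
  finally show ?thesis .
qed

section \<open>Balanced separators\<close>

lemma exists_subset_sum_between:
  fixes a :: "'a \<Rightarrow> real"
  assumes "finite I" "\<And>i. i \<in> I \<Longrightarrow> 0 \<le> a i \<and> a i \<le> h" "h / 2 \<le> (\<Sum>i\<in>I. a i)" "0 \<le> h"
  shows "\<exists>J\<subseteq>I. h / 2 \<le> (\<Sum>i\<in>J. a i) \<and> (\<Sum>i\<in>J. a i) \<le> h"
  using assms
proof (induction I rule: finite_induct)
  case empty
  then show ?case by auto
next
  case (insert i I)
  consider "h / 2 \<le> (\<Sum>i\<in>I. a i)" | "h / 2 \<le> a i" | "(\<Sum>i\<in>I. a i) < h / 2" "a i < h / 2"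
    by linarith
  then show ?case
  proof cases
    case 1
    then obtain J where "J \<subseteq> I" "h / 2 \<le> (\<Sum>i\<in>J. a i) \<and> (\<Sum>i\<in>J. a i) \<le> h"
      using insert by auto
    then show ?thesis by (intro exI[of _ J]) auto
  next
    case 2
    then show ?thesis using insert by (intro exI[of _ "{i}"]) auto
  next
    case 3
    then show ?thesis using insert by (intro exI[of _ "insert i I"]) auto
  qed
qed

lemma boundary_UN_subset:
  "boundary V E (\<Union>i\<in>I. A i) \<subseteq> (\<Union>i\<in>I. boundary V E (A i))"
  by (auto simp: boundary_def)

definition parent :: "nat set set \<Rightarrow> nat \<Rightarrow> nat" where
  "parent E v = Max (lower_nbrs E v)"

context ktree
begin

lemma parent_in_lower_nbrs:
  assumes "k \<le> v" "v < k + t"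
  shows "parent E v \<in> lower_nbrs E v"
proof -
  have "lower_nbrs E v \<noteq> {}" using card_lower_nbrs[OF assms] k_pos by auto
  then show ?thesis unfolding parent_def using finite_lower_nbrs by (rule Max_in[rotated])
qed

lemma parent_less: "k \<le> v \<Longrightarrow> v < k + t \<Longrightarrow> parent E v < v"
  using parent_in_lower_nbrs by (simp add: lower_nbrs_def)

lemma le_parent: "u \<in> lower_nbrs E v \<Longrightarrow> u \<le> parent E v"
  unfolding parent_def using finite_lower_nbrs by simp

lemma lower_nbrs_subset_parent:
  assumes "k \<le> v" "v < k + t"
  shows "lower_nbrs E v \<subseteq> insert (parent E v) (lower_nbrs E (parent E v))"
proof
  fix u assume u: "u \<in> lower_nbrs E v"
  show "u \<in> insert (parent E v) (lower_nbrs E (parent E v))"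
  proof (cases "u = parent E v")
    case False
    then have "u < parent E v" using le_parent[OF u] by simp
    moreover have "{u, parent E v} \<in> E"
      using lower_nbrs_clique[OF assms u parent_in_lower_nbrs[OF assms] False] .
    ultimately show ?thesis by (simp add: lower_nbrs_def)
  qed simp
qed

lemma lower_nbrs_subset_roots: "parent E v < k \<Longrightarrow> lower_nbrs E v \<subseteq> {0..<k}"
  using le_parent by fastforce

inductive_set subtree :: "nat \<Rightarrow> nat set" for x :: nat where
  subtree_self: "x \<in> subtree x"
| subtree_child: "y \<in> subtree x \<Longrightarrow> k \<le> z \<Longrightarrow> z < k + t \<Longrightarrow> parent E z = y \<Longrightarrow> z \<in> subtree x"

lemma subtree_bounds: "y \<in> subtree x \<Longrightarrow> x \<le> y \<and> (y = x \<or> k \<le> y \<and> y < k + t)"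
proof (induction rule: subtree.induct)
  case (subtree_child y z)
  then show ?case using parent_less[of z] by auto
qed simp

lemma subtree_subset: "k \<le> x \<Longrightarrow> x < k + t \<Longrightarrow> subtree x \<subseteq> {k..<k + t}"
  using subtree_bounds by fastforce

lemma finite_subtree: "finite (subtree x)"
  by (rule finite_subset[of _ "insert x {..<k + t}"]) (use subtree_bounds in auto)

lemma subtree_trans: "y \<in> subtree a \<Longrightarrow> a \<in> subtree x \<Longrightarrow> y \<in> subtree x"
  by (induction rule: subtree.induct) (auto intro: subtree_child)

lemma subtree_ancestor: "y \<in> subtree b \<Longrightarrow> y \<in> subtree a \<Longrightarrow> a \<le> b \<Longrightarrow> b \<in> subtree a"
proof (induction rule: subtree.induct)
  case subtree_self
  then show ?case by simp
next
  case (subtree_child y z)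
  show ?case
  proof (cases "z = a")
    case True
    then have "b \<le> a" using subtree_bounds subtree_child subtree.subtree_child by blast
    then show ?thesis using subtree_child True by (simp add: subtree_self)
  next
    case False
    from subtree_child.prems(1) have "parent E z \<in> subtree a"
      by cases (use False subtree_child in auto)
    then show ?thesis using subtree_child by auto
  qed
qed

lemma subtrees_disjoint:
  assumes "c \<noteq> c'" "parent E c < c'" "parent E c' < c"
  shows "subtree c \<inter> subtree c' = {}"
proof -
  have *: "y \<notin> subtree c'" if "c < c'" "parent E c' < c" "y \<in> subtree c" for c c' y
  proof
    assume "y \<in> subtree c'"
    then have "c' \<in> subtree c"
      using subtree_ancestor[OF _ \<open>y \<in> subtree c\<close>] that(1) by simp
    then have "parent E c' \<in> subtree c"
    proof cases
      case subtree_self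
      then show ?thesis using that(1) by simp
    qed simp
    then have "c \<le> parent E c'" using subtree_bounds by blast
    then show False using that(2) by simp
  qed
  from assms(1) consider "c < c'" | "c' < c" by linarith
  then show ?thesis
    by cases (use assms * in blast)+
qed

lemma subtree_upward_closed:
  assumes "k \<le> x" "y \<in> subtree x" "z < k + t" "y \<in> lower_nbrs E z"
  shows "z \<in> subtree x"
  using assms(3,4)
proof (induction z rule: less_induct)
  case (less z)
  have "x \<le> y" "y < z" using subtree_bounds[OF assms(2)] less.prems by (auto simp: lower_nbrs_def)
  then have "k \<le> z" using assms(1) by simp
  show ?case
  proof (cases "parent E z = y")
    case True
    then show ?thesis using subtree_child[OF assms(2) \<open>k \<le> z\<close> less.prems(1)] by simp
  next
    case False
    then have "y \<in> lower_nbrs E (parent E z)"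
      using lower_nbrs_subset_parent[OF \<open>k \<le> z\<close> less.prems(1)] less.prems(2) by auto
    moreover have "parent E z < z" using parent_less[OF \<open>k \<le> z\<close> less.prems(1)] .
    ultimately have "parent E z \<in> subtree x" using less.IH less.prems by auto
    then show ?thesis using subtree_child[OF _ \<open>k \<le> z\<close> less.prems(1)] by simp
  qed
qed

lemma lower_nbrs_subtree:
  assumes "y \<in> subtree x" "k \<le> x" "z \<in> lower_nbrs E y" "z \<notin> subtree x"
  shows "z \<in> lower_nbrs E x"
  using assms(1,3,4)
proof (induction arbitrary: z rule: subtree.induct)
  case (subtree_child y y')
  have "k \<le> y" using subtree_bounds[OF subtree_child.hyps(1)] assms(2) by auto
  have "z \<noteq> y" using subtree_child by (auto intro: subtree.subtree_child)
  then show ?case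
    using lower_nbrs_subset_parent[OF subtree_child.hyps(2,3)] subtree_child by auto
qed simp

lemma boundary_subtree:
  assumes "k \<le> x" "x < k + t"
  shows "boundary (ktree_vertices k t) E (subtree x) \<subseteq> lower_nbrs E x"
proof
  fix z assume "z \<in> boundary (ktree_vertices k t) E (subtree x)"
  then obtain y where y: "y \<in> subtree x" "z \<notin> subtree x" "{y, z} \<in> E"
    by (auto simp: boundary_def)
  have "y < k + t" "z < k + t" using edge_bounds[OF y(3)] by auto
  show "z \<in> lower_nbrs E x"
  proof (cases "z < y")
    case True
    then have "z \<in> lower_nbrs E y" using y(3) by (simp add: lower_nbrs_def insert_commute)
    then show ?thesis using lower_nbrs_subtree[OF y(1) assms(1) _ y(2)] by blast
  next
    case False
    then have "y \<in> lower_nbrs E z" using y(3) edge_bounds[OF y(3)] by (simp add: lower_nbrs_def)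
    then show ?thesis using subtree_upward_closed[OF assms(1) y(1) \<open>z < k + t\<close>] y(2) by blast
  qed
qed

definition children :: "nat \<Rightarrow> nat set" where
  "children x = {c. k \<le> c \<and> c < k + t \<and> parent E c = x}"

definition root_children :: "nat set" where
  "root_children = {c. k \<le> c \<and> c < k + t \<and> parent E c < k}"

lemma children_subset: "children x \<subseteq> {k..<k + t}"
  by (auto simp: children_def)

lemma root_children_subset: "root_children \<subseteq> {k..<k + t}"
  by (auto simp: root_children_def)

lemma subtrees_children_disjoint:
  "c \<in> children x \<Longrightarrow> c' \<in> children x \<Longrightarrow> c \<noteq> c' \<Longrightarrow> subtree c \<inter> subtree c' = {}"
  using parent_less[of c] parent_less[of c'] by (intro subtrees_disjoint) (auto simp: children_def)

lemma subtrees_root_children_disjoint: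
  "c \<in> root_children \<Longrightarrow> c' \<in> root_children \<Longrightarrow> c \<noteq> c' \<Longrightarrow> subtree c \<inter> subtree c' = {}"
  by (intro subtrees_disjoint) (auto simp: root_children_def)

lemma sum_UN_subtrees:
  assumes "finite F" "\<And>c c'. c \<in> F \<Longrightarrow> c' \<in> F \<Longrightarrow> c \<noteq> c' \<Longrightarrow> subtree c \<inter> subtree c' = {}"
  shows "sum f (\<Union>c\<in>F. subtree c) = (\<Sum>c\<in>F. sum f (subtree c))"
  using assms finite_subtree by (intro sum.UNION_disjoint) auto

lemma sum_subtree_eq:
  "sum f (subtree x) = f x + (\<Sum>c\<in>children x. sum f (subtree c))"
proof -
  have "subtree x = insert x (\<Union>c\<in>children x. subtree c)"
  proof (intro equalityI subsetI)
    fix y assume "y \<in> subtree x"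
    then show "y \<in> insert x (\<Union>c\<in>children x. subtree c)"
      by (induction rule: subtree.induct) (auto simp: children_def intro: subtree.intros)
  qed (auto simp: children_def
      intro: subtree_self subtree_trans[OF _ subtree_child[OF subtree_self]])
  moreover have "x \<notin> (\<Union>c\<in>children x. subtree c)"
    using subtree_bounds parent_less by (fastforce simp: children_def)
  moreover have "finite (children x)"
    using children_subset by (rule finite_subset) simp
  ultimately show ?thesis
    using subtrees_children_disjoint finite_subtree by (simp add: sum_UN_subtrees)
qed

lemma sum_nonroots_eq: "sum f {k..<k + t} = (\<Sum>c\<in>root_children. sum f (subtree c))"
proof -
  have "{k..<k + t} \<subseteq> (\<Union>c\<in>root_children. subtree c)"
  proof
    fix y assume "y \<in> {k..<k + t}"
    then show "y \<in> (\<Union>c\<in>root_children. subtree c)"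
    proof (induction y rule: less_induct)
      case (less y)
      show ?case
      proof (cases "parent E y < k")
        case False
        then have "parent E y \<in> (\<Union>c\<in>root_children. subtree c)"
          using less parent_less by auto
        then show ?thesis using less.prems by (auto intro: subtree_child)
      qed (use less.prems in \<open>auto simp: root_children_def intro: subtree_self\<close>)
    qed
  qed
  moreover have "(\<Union>c\<in>root_children. subtree c) \<subseteq> {k..<k + t}"
    using root_children_subset subtree_subset by fastforce
  moreover have "finite root_children"
    using root_children_subset by (rule finite_subset) simp
  ultimately have "(\<Union>c\<in>root_children. subtree c) = {k..<k + t}"
    "finite root_children" by auto
  then show ?thesis
    using sum_UN_subtrees[of root_children f] subtrees_root_children_disjoint by simp
qed

lemma card_boundary_UN_subtrees_le:
  assumes "J \<subseteq> {k..<k + t}" "finite B" "\<And>c. c \<in> J \<Longrightarrow> lower_nbrs E c \<subseteq> B"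
  shows "card (boundary (ktree_vertices k t) E (\<Union>c\<in>J. subtree c)) \<le> card B"
proof -
  have "boundary (ktree_vertices k t) E (\<Union>c\<in>J. subtree c)
      \<subseteq> (\<Union>c\<in>J. boundary (ktree_vertices k t) E (subtree c))"
    by (rule boundary_UN_subset)
  also have "\<dots> \<subseteq> B"
    using assms(1,3) boundary_subtree by (intro UN_least) (auto simp: subset_iff)
  finally show ?thesis using assms(2) by (rule card_mono[rotated])
qed

lemma separator_from_subtrees:
  fixes f :: "nat \<Rightarrow> real"
  assumes F: "F \<subseteq> {k..<k + t}"
    and disjoint: "\<And>c c'. c \<in> F \<Longrightarrow> c' \<in> F \<Longrightarrow> c \<noteq> c' \<Longrightarrow> subtree c \<inter> subtree c' = {}"
    and f_nonneg: "\<And>x. 0 \<le> f x" and W: "0 \<le> W"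
    and light: "\<And>c. c \<in> F \<Longrightarrow> sum f (subtree c) \<le> W / 2"
    and heavy: "W / 4 \<le> (\<Sum>c\<in>F. sum f (subtree c))"
    and B: "finite B" "card B \<le> k + 1" "\<And>c. c \<in> F \<Longrightarrow> lower_nbrs E c \<subseteq> B"
  shows "\<exists>S\<subseteq>{k..<k + t}. W / 4 \<le> sum f S \<and> sum f S \<le> W / 2 \<and>
           card (boundary (ktree_vertices k t) E S) \<le> k + 1"
proof -
  have "finite F" using F by (rule finite_subset) simp
  then obtain J where J: "J \<subseteq> F" "W / 2 / 2 \<le> (\<Sum>c\<in>J. sum f (subtree c))"
      "(\<Sum>c\<in>J. sum f (subtree c)) \<le> W / 2"
    using exists_subset_sum_between[of F "\<lambda>c. sum f (subtree c)" "W / 2"] light heavy f_nonneg W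
    by (auto intro: sum_nonneg)
  have "finite J" using J(1) \<open>finite F\<close> by (rule finite_subset)
  have "sum f (\<Union>c\<in>J. subtree c) = (\<Sum>c\<in>J. sum f (subtree c))"
    using \<open>finite J\<close> J(1) disjoint by (intro sum_UN_subtrees) auto
  moreover have "(\<Union>c\<in>J. subtree c) \<subseteq> {k..<k + t}"
    using J(1) F by (intro UN_least subtree_subset) auto
  moreover have "card (boundary (ktree_vertices k t) E (\<Union>c\<in>J. subtree c)) \<le> k + 1"
  proof -
    have "card (boundary (ktree_vertices k t) E (\<Union>c\<in>J. subtree c)) \<le> card B"
      using J(1) F B(1,3) by (intro card_boundary_UN_subtrees_le) auto
    then show ?thesis using B(2) by linarith
  qed
  ultimately show ?thesis using J by (intro exI[of _ "\<Union>c\<in>J. subtree c"]) auto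
qed

text \<open>A centroid argument: below the largest vertex whose subtree is heavier than \<open>W / 2\<close>
  (or below the root clique, if there is no such vertex) all subtrees are light, and a greedy
  choice among them gives the separator.\<close>

lemma balanced_separator:
  fixes f :: "nat \<Rightarrow> real"
  assumes f_nonneg: "\<And>x. 0 \<le> f x" and W: "0 \<le> W"
    and f_light: "\<And>x. k \<le> x \<Longrightarrow> x < k + t \<Longrightarrow> f x \<le> W / 4"
    and heavy: "W / 2 \<le> sum f {k..<k + t}"
  shows "\<exists>S\<subseteq>{k..<k + t}. W / 4 \<le> sum f S \<and> sum f S \<le> W / 2 \<and>
           card (boundary (ktree_vertices k t) E S) \<le> k + 1"
proof (cases "\<exists>x\<in>{k..<k + t}. W / 2 < sum f (subtree x)")
  case True
  define H where "H = {x\<in>{k..<k + t}. W / 2 < sum f (subtree x)}"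
  define x where "x = Max H"
  have "finite H" "H \<noteq> {}" using True by (auto simp: H_def)
  then have "x \<in> H" unfolding x_def by (rule Max_in)
  then have x: "k \<le> x" "x < k + t" "W / 2 < sum f (subtree x)" by (auto simp: H_def)
  have "W / 4 \<le> (\<Sum>c\<in>children x. sum f (subtree c))"
    using x sum_subtree_eq[of f x] f_light[OF x(1,2)] by linarith
  moreover have "sum f (subtree c) \<le> W / 2" if "c \<in> children x" for c
  proof (rule ccontr)
    assume "\<not> ?thesis"
    then have "c \<le> x" using that \<open>finite H\<close> by (auto simp: x_def H_def children_def)
    then show False using that parent_less by (fastforce simp: children_def)
  qed
  moreover have "card (insert x (lower_nbrs E x)) \<le> k + 1"
    using card_lower_nbrs[OF x(1,2)] finite_lower_nbrs by (simp add: card_insert_if)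
  moreover have "lower_nbrs E c \<subseteq> insert x (lower_nbrs E x)" if "c \<in> children x" for c
    using that lower_nbrs_subset_parent[of c] by (auto simp: children_def)
  ultimately show ?thesis
    using children_subset subtrees_children_disjoint f_nonneg W finite_lower_nbrs
    by (intro separator_from_subtrees[of "children x" _ _ "insert x (lower_nbrs E x)"]) auto
next
  case False
  then have "sum f (subtree c) \<le> W / 2" if "c \<in> root_children" for c
    using that by (auto simp: root_children_def not_less)
  then show ?thesis
    using heavy sum_nonroots_eq[of f] root_children_subset lower_nbrs_subset_roots
      subtrees_root_children_disjoint f_nonneg W
    by (intro separator_from_subtrees[of root_children _ _ "{0..<k}"])
       (auto simp: root_children_def)
qed

end

section \<open>Vertex expansion and conductance\<close>

lemma vertex_expansion_le:
  assumes "finite V" "S \<subseteq> V" "0 < card S" "real (card S) \<le> real (card V) / 2"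
  shows "vertex_expansion V E \<le> real (card (boundary V E S)) / real (card S)"
proof -
  let ?R = "{real (card (boundary V E S')) / real (card S') | S'.
              S' \<subseteq> V \<and> 0 < card S' \<and> real (card S') \<le> real (card V) / 2}"
  have "?R \<subseteq> (\<lambda>S'. real (card (boundary V E S')) / real (card S')) ` Pow V" by auto
  moreover have "finite (Pow V)" using assms(1) by simp
  ultimately have "finite ?R" by (auto intro: finite_subset)
  then show ?thesis unfolding vertex_expansion_def using assms by (intro Min_le) auto
qed

lemma conductance_le:
  assumes "finite V" "S \<subseteq> V" "0 < vol V E S" "real (vol V E S) \<le> real (vol V E V) / 2"
  shows "conductance V E \<le> real (cut_edges V E S) / real (vol V E S)"
proof -
  let ?R = "{real (cut_edges V E S') / real (vol V E S') | S'.
              S' \<subseteq> V \<and> 0 < vol V E S' \<and> real (vol V E S') \<le> real (vol V E V) / 2}"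
  have "?R \<subseteq> (\<lambda>S'. real (cut_edges V E S') / real (vol V E S')) ` Pow V" by auto
  moreover have "finite (Pow V)" using assms(1) by simp
  ultimately have "finite ?R" by (auto intro: finite_subset)
  then show ?thesis unfolding conductance_def using assms by (intro Min_le) auto
qed

lemma cut_edges_le_sum_degree_boundary:
  assumes "finite V" "S \<subseteq> V"
  shows "cut_edges V E S \<le> (\<Sum>b\<in>boundary V E S. degree V E b)"
proof -
  let ?star = "\<lambda>b. (\<lambda>u. {u, b}) ` {u \<in> V. {u, b} \<in> E}"
  have "finite (boundary V E S)"
    using assms(1) by (rule finite_subset[rotated]) (auto simp: boundary_def)
  have "{e \<in> E. \<exists>u\<in>S. \<exists>w\<in>V - S. e = {u, w}} \<subseteq> (\<Union>b\<in>boundary V E S. ?star b)"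
    using assms(2) by (auto simp: boundary_def)
  then have "cut_edges V E S \<le> card (\<Union>b\<in>boundary V E S. ?star b)"
    unfolding cut_edges_def using assms(1) \<open>finite (boundary V E S)\<close>
    by (intro card_mono) auto
  also have "\<dots> \<le> (\<Sum>b\<in>boundary V E S. card (?star b))"
    by (rule card_UN_le[OF \<open>finite (boundary V E S)\<close>])
  also have "\<dots> \<le> (\<Sum>b\<in>boundary V E S. degree V E b)"
    unfolding degree_def by (intro sum_mono card_image_le) (simp add: assms(1))
  finally show ?thesis .
qed

lemma cut_edges_le_card_boundary_mult:
  assumes "finite V" "S \<subseteq> V" "\<And>w. real (degree V E w) \<le> M"
  shows "real (cut_edges V E S) \<le> real (card (boundary V E S)) * M"
proof -
  have "real (cut_edges V E S) \<le> (\<Sum>b\<in>boundary V E S. real (degree V E b))"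
    using cut_edges_le_sum_degree_boundary[OF assms(1,2)] by (simp flip: of_nat_sum)
  also have "\<dots> \<le> (\<Sum>b\<in>boundary V E S. M)"
    using assms(3) by (intro sum_mono)
  finally show ?thesis by simp
qed

context ktree
begin

lemma degree_ge_k:
  assumes "k \<le> v" "v < k + t"
  shows "k \<le> degree (ktree_vertices k t) E v"
proof -
  have "lower_nbrs E v \<subseteq> {u \<in> ktree_vertices k t. {u, v} \<in> E}"
    using assms by (auto simp: lower_nbrs_def ktree_vertices_def)
  then have "card (lower_nbrs E v) \<le> degree (ktree_vertices k t) E v"
    unfolding degree_def by (intro card_mono) auto
  then show ?thesis using card_lower_nbrs[OF assms] by simp
qed

lemma vertex_expansion_ktree_le:
  assumes "k \<le> t" "4 \<le> t"
  shows "vertex_expansion (ktree_vertices k t) E \<le> 8 * real k / real t"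
proof -
  obtain S where S: "S \<subseteq> {k..<k + t}" "real (k + t) / 4 \<le> real (card S)"
      "real (card S) \<le> real (k + t) / 2" "card (boundary (ktree_vertices k t) E S) \<le> k + 1"
    using balanced_separator[of "\<lambda>_. 1" "real (k + t)"] assms by auto
  have "0 < card S" using S(2) assms(2) by (cases "card S") auto
  have "vertex_expansion (ktree_vertices k t) E \<le>
      real (card (boundary (ktree_vertices k t) E S)) / real (card S)"
    using S \<open>0 < card S\<close> by (intro vertex_expansion_le) (auto simp: ktree_vertices_def)
  also have "\<dots> \<le> real (k + 1) / (real (k + t) / 4)"
    using S(2,4) \<open>0 < card S\<close> assms(2) by (intro frac_le) auto
  also have "\<dots> = 4 * real (k + 1) / real (k + t)" by simp
  also have "\<dots> \<le> 4 * real (k + 1) / real t"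
    using assms(2) by (intro divide_left_mono) auto
  also have "\<dots> \<le> 8 * real k / real t"
    using k_pos by (intro divide_right_mono) auto
  finally show ?thesis .
qed

lemma vol_bounds_of_degree_le:
  assumes k: "2 \<le> k" and M: "0 \<le> M" "M \<le> real t / 2"
    and degree_le: "\<And>w. real (degree (ktree_vertices k t) E w) \<le> M"
  shows "real k * real t \<le> real (vol (ktree_vertices k t) E (ktree_vertices k t))"
    and "real (vol (ktree_vertices k t) E (ktree_vertices k t)) / 2
      \<le> (\<Sum>v\<in>{k..<k + t}. real (degree (ktree_vertices k t) E v))"
    and "real (degree (ktree_vertices k t) E v)
      \<le> real (vol (ktree_vertices k t) E (ktree_vertices k t)) / 4"
proof -
  let ?W = "real (vol (ktree_vertices k t) E (ktree_vertices k t))"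
  let ?d = "\<lambda>v. real (degree (ktree_vertices k t) E v)"
  have W_split: "?W = (\<Sum>v\<in>{0..<k}. ?d v) + (\<Sum>v\<in>{k..<k + t}. ?d v)"
    unfolding vol_def ktree_vertices_def
    by (simp add: sum.atLeastLessThan_concat[of 0 k "k + t", symmetric])
  have "real k * real t \<le> (\<Sum>v\<in>{k..<k + t}. ?d v)"
    using sum_mono[of "{k..<k + t}" "\<lambda>_. real k" ?d] degree_ge_k by (simp add: mult.commute)
  moreover have "(\<Sum>v\<in>{0..<k}. ?d v) \<le> real k * M"
    using sum_mono[of "{0..<k}" ?d "\<lambda>_. M"] degree_le by simp
  moreover have "real k * M \<le> real k * (real t / 2)"
    using M by (intro mult_left_mono) auto
  moreover have "0 \<le> (\<Sum>v\<in>{0..<k}. ?d v)" by (simp add: sum_nonneg)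
  ultimately show W: "real k * real t \<le> ?W" "?W / 2 \<le> (\<Sum>v\<in>{k..<k + t}. ?d v)"
    using W_split by linarith+
  have "2 * real t \<le> real k * real t" using k by (intro mult_right_mono) auto
  then show "?d v \<le> ?W / 4"
    using degree_le[of v] M W(1) by linarith
qed

lemma conductance_ktree_le:
  assumes k: "2 \<le> k" and t: "1 \<le> t" and M: "0 \<le> M" "M \<le> real t / 2"
    and degree_le: "\<And>w. real (degree (ktree_vertices k t) E w) \<le> M"
  shows "conductance (ktree_vertices k t) E \<le> 6 * M / real t"
proof -
  let ?V = "ktree_vertices k t"
  let ?d = "\<lambda>v. real (degree ?V E v)"
  let ?W = "real (vol ?V E ?V)"
  note W = vol_bounds_of_degree_le[OF k M degree_le]
  have "0 \<le> ?W" by simp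
  then obtain S where S: "S \<subseteq> {k..<k + t}" "?W / 4 \<le> sum ?d S" "sum ?d S \<le> ?W / 2"
      "card (boundary ?V E S) \<le> k + 1"
    using balanced_separator[of ?d ?W] W by auto
  have S_V: "S \<subseteq> ?V" using S(1) by (auto simp: ktree_vertices_def)
  have vol_S: "real (vol ?V E S) = sum ?d S" by (simp add: vol_def)
  have kt: "0 < real k * real t" using k t by simp
  have "real (cut_edges ?V E S) \<le> real (card (boundary ?V E S)) * M"
    using S_V degree_le by (intro cut_edges_le_card_boundary_mult) auto
  also have "\<dots> \<le> real (k + 1) * M"
    using S(4) M(1) by (intro mult_right_mono) auto
  finally have cut: "real (cut_edges ?V E S) \<le> real (k + 1) * M" .
  have "conductance ?V E \<le> real (cut_edges ?V E S) / real (vol ?V E S)"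
    using S_V S W(1) kt vol_S by (intro conductance_le) auto
  also have "\<dots> \<le> real (k + 1) * M / (real k * real t / 4)"
    using cut S(2) W(1) vol_S kt M(1) by (intro frac_le) auto
  also have "\<dots> = (4 * (real k + 1) / real k) * (M / real t)"
    using k t by (simp add: field_simps)
  also have "\<dots> \<le> 6 * (M / real t)"
    using k M(1) by (intro mult_right_mono) (auto simp: field_simps)
  finally show ?thesis by simp
qed

end

section \<open>Degrees and the asymptotic bounds\<close>

context ktree
begin

lemma insert_lower_nbrs_in_cliques:
  assumes v: "k \<le> v" "v < k + t" and d: "d \<in> lower_nbrs E v"
  shows "insert v (lower_nbrs E v - {d}) \<in> cliques"
proof -
  have "v \<notin> lower_nbrs E v" by (simp add: lower_nbrs_def)
  then have "card (insert v (lower_nbrs E v - {d})) = k"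
    using card_lower_nbrs[OF v] finite_lower_nbrs d k_pos by (simp add: card_Diff_singleton)
  moreover have "insert v (lower_nbrs E v - {d}) \<subseteq> ktree_vertices k t"
    using v by (auto simp: lower_nbrs_def ktree_vertices_def)
  moreover have "{x, y} \<in> E" if "x \<in> insert v (lower_nbrs E v - {d})"
    "y \<in> insert v (lower_nbrs E v - {d})" "x \<noteq> y" for x y
  proof -
    have "{u, v} \<in> E" "{v, u} \<in> E" if "u \<in> lower_nbrs E v" for u
      using that by (simp_all add: lower_nbrs_def insert_commute)
    then show ?thesis
      using \<open>x \<in> _\<close> \<open>y \<in> _\<close> \<open>x \<noteq> y\<close> lower_nbrs_clique[OF v] by blast
  qed
  ultimately show ?thesis by (simp add: kcliques_def)
qed

lemma edge_in_cliques:
  assumes k: "2 \<le> k" and e: "{a, b} \<in> E" and ab: "a < b"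
  shows "\<exists>Q\<in>cliques. a \<in> Q \<and> b \<in> Q"
proof (cases "b < k")
  case True
  then show ?thesis using root_in_cliques ab by (intro bexI[of _ "{0..<k}"]) auto
next
  case False
  have b: "k \<le> b" "b < k + t" using False edge_bounds[OF e] by auto
  have a: "a \<in> lower_nbrs E b" using e ab by (simp add: lower_nbrs_def)
  have "card (lower_nbrs E b - {a}) = k - 1"
    using card_lower_nbrs[OF b] finite_lower_nbrs a by (simp add: card_Diff_singleton)
  then have "lower_nbrs E b - {a} \<noteq> {}" using k by (intro notI) simp
  then obtain d where d: "d \<in> lower_nbrs E b" "d \<noteq> a" by blast
  show ?thesis
    using insert_lower_nbrs_in_cliques[OF b d(1)] a d(2)
    by (intro bexI[of _ "insert b (lower_nbrs E b - {d})"]) auto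
qed

lemma degree_le_clique_count:
  assumes k: "2 \<le> k"
  shows "degree (ktree_vertices k t) E w \<le> (k - 1) * clique_count k t E w"
proof -
  let ?Q = "{Q \<in> cliques. w \<in> Q}"
  have "finite ?Q" using finite_cliques by simp
  have "{u \<in> ktree_vertices k t. {u, w} \<in> E} \<subseteq> (\<Union>Q\<in>?Q. Q - {w})"
  proof
    fix u assume "u \<in> {u \<in> ktree_vertices k t. {u, w} \<in> E}"
    then have e: "{u, w} \<in> E" "{w, u} \<in> E" by (simp_all add: insert_commute)
    then have "u \<noteq> w" using edge_bounds by blast
    then consider "u < w" | "w < u" by linarith
    then show "u \<in> (\<Union>Q\<in>?Q. Q - {w})"
      by cases (use edge_in_cliques[OF k e(1)] edge_in_cliques[OF k e(2)] \<open>u \<noteq> w\<close> in blast)+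
  qed
  moreover have "finite (\<Union>Q\<in>?Q. Q - {w})"
    using \<open>finite ?Q\<close> kcliques_ktree_verticesD by auto
  ultimately have "degree (ktree_vertices k t) E w \<le> card (\<Union>Q\<in>?Q. Q - {w})"
    unfolding degree_def by (rule card_mono[rotated])
  also have "\<dots> \<le> (\<Sum>Q\<in>?Q. card (Q - {w}))"
    using \<open>finite ?Q\<close> by (rule card_UN_le)
  also have "\<dots> = (\<Sum>Q\<in>?Q. k - 1)"
  proof (rule sum.cong[OF refl])
    fix Q assume "Q \<in> ?Q"
    then have "Q \<in> cliques" "w \<in> Q" by auto
    then show "card (Q - {w}) = k - 1"
      using kcliques_ktree_verticesD(2,3) by (simp add: card_Diff_singleton)
  qed
  also have "\<dots> = (k - 1) * clique_count k t E w"
    by (simp add: clique_count_def)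
  finally show ?thesis .
qed

lemma degree_le_of_clique_potential_le:
  assumes k: "2 \<le> k" and M: "0 \<le> M" and potential: "clique_potential k t E \<le> (M / real k) ^ 2"
  shows "real (degree (ktree_vertices k t) E w) \<le> M"
proof -
  have count: "real (clique_count k t E w) \<le> M / real k"
  proof (cases "w < k + t")
    case True
    have "real (clique_count k t E w) ^ 2 \<le> clique_potential k t E"
      unfolding clique_potential_def using True by (intro member_le_sum) auto
    then have "real (clique_count k t E w) ^ 2 \<le> (M / real k) ^ 2"
      using potential by linarith
    then show ?thesis by (rule power2_le_imp_le) (use M in simp)
  next
    case False
    then have none: "{Q \<in> cliques. w \<in> Q} = {}"
      by (auto dest!: kcliques_ktree_verticesD(1))
    show ?thesis using M by (simp add: clique_count_def none)
  qed
  have "real (degree (ktree_vertices k t) E w) \<le> real ((k - 1) * clique_count k t E w)"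
    using degree_le_clique_count[OF k] by (simp only: of_nat_le_iff)
  also have "\<dots> = (real k - 1) * real (clique_count k t E w)"
    using k by (simp add: of_nat_diff)
  also have "\<dots> \<le> (real k - 1) * (M / real k)"
    using count k by (intro mult_left_mono) auto
  also have "\<dots> \<le> M" using k M by (simp add: field_simps)
  finally show ?thesis .
qed

end

lemma prob_conductance_le_ge:
  assumes k: "2 \<le> k" and n: "1 \<le> n" and M: "0 < M" "M \<le> real n / 2"
  shows "1 - measure_pmf.expectation (random_ktree k n) (clique_potential k n) / (M / real k) ^ 2
    \<le> measure_pmf.prob (random_ktree k n) {E. conductance (ktree_vertices k n) E \<le> 6 * M / real n}"
proof -
  let ?P = "random_ktree k n"
  let ?A = "{E. conductance (ktree_vertices k n) E \<le> 6 * M / real n}"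
  define a where "a = (M / real k) ^ 2"
  have "0 < a" using M k by (simp add: a_def)
  have "(UNIV - ?A) \<inter> set_pmf ?P \<subseteq> {E. a \<le> clique_potential k n E}"
  proof (intro subsetI CollectI, rule ccontr)
    fix E assume E: "E \<in> (UNIV - ?A) \<inter> set_pmf ?P" and "\<not> a \<le> clique_potential k n E"
    interpret ktree k n E using ktree_random_ktree E k by auto
    have "real (degree (ktree_vertices k n) E w) \<le> M" for w
      using \<open>\<not> a \<le> _\<close> M k by (intro degree_le_of_clique_potential_le) (auto simp: a_def)
    then have "E \<in> ?A" using conductance_ktree_le k n M by auto
    then show False using E by simp
  qed
  then have "measure_pmf.prob ?P (UNIV - ?A) \<le> measure_pmf.prob ?P {E. a \<le> clique_potential k n E}"
    by (metis measure_Int_set_pmf measure_pmf.finite_measure_mono sets_measure_pmf UNIV_I)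
  also have "\<dots> \<le> measure_pmf.expectation ?P (clique_potential k n) / a"
  proof -
    have "integrable ?P (clique_potential k n)"
      using k by (intro integrable_measure_pmf_finite finite_set_pmf_random_ktree) simp
    from integral_Markov_inequality_measure[OF this _ _ \<open>0 < a\<close>]
    show ?thesis by (simp add: clique_potential_nonneg)
  qed
  finally show ?thesis
    using measure_pmf.prob_compl[of ?A ?P] by (simp add: a_def)
qed

lemma expectation_clique_potential_le_powr:
  assumes k: "2 \<le> k" and n: "1 \<le> n"
  shows "measure_pmf.expectation (random_ktree k n) (clique_potential k n)
    \<le> 4 * real k ^ 3 * real n powr (2 - 2 / real k) * (1 + ln (2 * real k) + ln (real n))"
proof -
  let ?\<beta> = "2 - 2 / real k"
  have \<beta>: "0 \<le> ?\<beta>" "?\<beta> \<le> 2" using k by (auto simp: field_simps)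
  have pos: "0 < real n" "0 < real k" using n k by auto
  have "1 / real k \<le> 1" "1 \<le> real n" using n k by auto
  then have "(real n + 1 / real k) powr ?\<beta> \<le> (2 * real n) powr ?\<beta>"
    using \<beta> pos by (intro powr_mono2) auto
  also have "\<dots> = 2 powr ?\<beta> * real n powr ?\<beta>" using pos by (simp add: powr_mult)
  also have "\<dots> \<le> 4 * real n powr ?\<beta>"
    using powr_mono[OF \<beta>(2), of 2] by (intro mult_right_mono) auto
  finally have growth: "(real n + 1 / real k) powr ?\<beta> \<le> 4 * real n powr ?\<beta>" .
  have "1 * 1 \<le> real k * real n"
    using n k by (intro mult_mono) auto
  then have "ln (real k * real n + 1) \<le> ln (2 * real k * real n)"
    using pos by simp
  then have log: "1 + ln (real k * real n + 1) \<le> 1 + ln (2 * real k) + ln (real n)"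
    using pos by (simp add: ln_mult)
  have "0 \<le> 1 + ln (real k * real n + 1)"
    using ln_ge_zero[of "real k * real n + 1"] by simp
  then have "measure_pmf.expectation (random_ktree k n) (clique_potential k n)
      \<le> real k ^ 3 * (4 * real n powr ?\<beta>) * (1 + ln (real k * real n + 1))"
    using expectation_clique_potential_le[OF k, of n] growth
    by (meson mult_left_mono mult_right_mono of_nat_0_le_iff zero_le_power order_trans)
  also have "\<dots> \<le> real k ^ 3 * (4 * real n powr ?\<beta>) * (1 + ln (2 * real k) + ln (real n))"
    using log by (intro mult_left_mono) auto
  finally show ?thesis by (simp add: mult_ac)
qed

lemma expectation_clique_potential_ratio_le:
  assumes k: "2 \<le> k" and n: "2 \<le> n"
  shows "measure_pmf.expectation (random_ktree k n) (clique_potential k n) /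
           (ln (real n) * real n powr (1 - 1 / real k) / real k) ^ 2
         \<le> 4 * real k ^ 5 * (1 + ln (2 * real k) + ln (real n)) / ln (real n) ^ 2"
proof -
  let ?\<beta> = "2 - 2 / real k"
  let ?C = "1 + ln (2 * real k) + ln (real n)"
  have pos: "0 < real n" "0 < ln (real n)" "0 < real k" using n k by auto
  have "(real n powr (1 - 1 / real k)) ^ 2 = real n powr ?\<beta>"
    using pos by (simp add: powr_realpow[symmetric] powr_powr algebra_simps)
  then have denominator: "(ln (real n) * real n powr (1 - 1 / real k) / real k) ^ 2
      = ln (real n) ^ 2 * real n powr ?\<beta> / real k ^ 2"
    by (simp add: power_divide power_mult_distrib)
  have "measure_pmf.expectation (random_ktree k n) (clique_potential k n) /
           (ln (real n) * real n powr (1 - 1 / real k) / real k) ^ 2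
      \<le> 4 * real k ^ 3 * real n powr ?\<beta> * ?C / (ln (real n) ^ 2 * real n powr ?\<beta> / real k ^ 2)"
    unfolding denominator using expectation_clique_potential_le_powr[OF k] n
    by (intro divide_right_mono) auto
  also have "\<dots> = 4 * real k ^ 5 * ?C / ln (real n) ^ 2"
    using pos by (simp add: field_simps eval_nat_numeral)
  finally show ?thesis .
qed

lemma expectation_clique_potential_ratio_tendsto_0:
  assumes k: "2 \<le> k"
  shows "(\<lambda>n. measure_pmf.expectation (random_ktree k n) (clique_potential k n) /
           (ln (real n) * real n powr (1 - 1 / real k) / real k) ^ 2) \<longlonglongrightarrow> 0"
proof (rule tendsto_sandwich)
  let ?c = "1 + ln (2 * real k)"
  show "\<forall>\<^sub>F n in sequentially.
      0 \<le> measure_pmf.expectation (random_ktree k n) (clique_potential k n) /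
           (ln (real n) * real n powr (1 - 1 / real k) / real k) ^ 2"
    by (intro always_eventually allI divide_nonneg_nonneg integral_nonneg_AE)
       (simp_all add: clique_potential_nonneg)
  show "\<forall>\<^sub>F n in sequentially. measure_pmf.expectation (random_ktree k n) (clique_potential k n) /
           (ln (real n) * real n powr (1 - 1 / real k) / real k) ^ 2
         \<le> 4 * real k ^ 5 * (?c * inverse (ln (real n)) ^ 2 + inverse (ln (real n)))"
    using eventually_ge_at_top[of 2]
  proof eventually_elim
    case (elim n)
    then have "0 < ln (real n)" by simp
    then show ?case
      using expectation_clique_potential_ratio_le[OF k elim]
      by (simp add: field_simps power2_eq_square)
  qed
  have "(\<lambda>n. inverse (ln (real n))) \<longlonglongrightarrow> 0"
    by (intro tendsto_inverse_0_at_top filterlim_compose[OF ln_at_top filterlim_real_sequentially])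
  then have "(\<lambda>n. 4 * real k ^ 5 * (?c * inverse (ln (real n)) ^ 2 + inverse (ln (real n))))
      \<longlonglongrightarrow> 4 * real k ^ 5 * (?c * 0 ^ 2 + 0)"
    by (intro tendsto_intros)
  then show "(\<lambda>n. 4 * real k ^ 5 * (?c * inverse (ln (real n)) ^ 2 + inverse (ln (real n))))
      \<longlonglongrightarrow> 0"
    by simp
qed (rule tendsto_const)

lemma prob_conductance_le_tendsto_1:
  assumes k: "2 \<le> k"
  shows "(\<lambda>n. measure_pmf.prob (random_ktree k n)
            {E. conductance (ktree_vertices k n) E \<le> 6 * ln (real n) * real n powr (- 1 / real k)})
         \<longlonglongrightarrow> 1"
proof (rule tendsto_sandwich[where h = "\<lambda>_. 1"])
  define M where "M n = ln (real n) * real n powr (1 - 1 / real k)" for n :: nat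
  have M_over_n: "M n / real n = ln (real n) / real n powr (1 / real k)" if "0 < n" for n
  proof -
    have "real n powr (1 - 1 / real k) = real n / real n powr (1 / real k)"
      using that by (simp add: powr_diff)
    then show ?thesis using that by (simp add: M_def)
  qed
  have "(\<lambda>n. ln (real n) / real n powr (1 / real k)) \<longlonglongrightarrow> 0"
    using k by (intro lim_ln_over_power) simp
  then have "\<forall>\<^sub>F n in sequentially. ln (real n) / real n powr (1 / real k) < 1 / 2"
    by (rule order_tendstoD) simp
  then show "\<forall>\<^sub>F n in sequentially.
      1 - measure_pmf.expectation (random_ktree k n) (clique_potential k n) / (M n / real k) ^ 2
      \<le> measure_pmf.prob (random_ktree k n)
          {E. conductance (ktree_vertices k n) E \<le> 6 * ln (real n) * real n powr (- 1 / real k)}"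
    using eventually_ge_at_top[of 2]
  proof eventually_elim
    case (elim n)
    then have "M n / real n < 1 / 2" using M_over_n[of n] by simp
    then have "M n \<le> real n / 2" using elim by (simp add: field_simps)
    moreover have "0 < M n" using elim by (simp add: M_def)
    moreover have "6 * M n / real n = 6 * ln (real n) * real n powr (- 1 / real k)"
      using elim M_over_n[of n] by (simp add: powr_minus_divide)
    ultimately show ?case
      using prob_conductance_le_ge[OF k, of n "M n"] elim by simp
  qed
  have "(\<lambda>n. 1 - measure_pmf.expectation (random_ktree k n) (clique_potential k n)
      / (M n / real k) ^ 2)
      \<longlonglongrightarrow> 1 - 0"
    unfolding M_def
    by (intro tendsto_diff tendsto_const expectation_clique_potential_ratio_tendsto_0 k)
  then show "(\<lambda>n. 1 - measure_pmf.expectation (random_ktree k n) (clique_potential k n) /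
      (M n / real k) ^ 2) \<longlonglongrightarrow> 1" by simp
qed (simp_all add: measure_pmf.prob_le_1)

lemma vertex_expansion_random_ktree_le:
  assumes "1 \<le> k" "k + 4 \<le> n" "E \<in> set_pmf (random_ktree k n)"
  shows "vertex_expansion (ktree_vertices k n) E \<le> 8 * real k / real n"
proof -
  interpret ktree k n E using ktree_random_ktree assms(1,3) .
  show ?thesis using assms(2) by (intro vertex_expansion_ktree_le) auto
qed

theorem proposition6:
  fixes k :: nat
  assumes "k \<ge> 2"
  shows "(\<exists>C::real. \<forall>\<^sub>F n in sequentially. \<forall>E \<in> set_pmf (random_ktree k n).
            vertex_expansion (ktree_vertices k n) E \<le> C * real k / real n)
       \<and> (\<exists>C::real. (\<lambda>n. measure_pmf.prob (random_ktree k n)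
            {E. conductance (ktree_vertices k n) E \<le> C * ln (real n) * real n powr (- 1 / real k)})
            \<longlonglongrightarrow> 1)"
proof
  have "\<forall>\<^sub>F n in sequentially. \<forall>E \<in> set_pmf (random_ktree k n).
          vertex_expansion (ktree_vertices k n) E \<le> 8 * real k / real n"
    using eventually_ge_at_top[of "k + 4"]
    by eventually_elim (use assms in \<open>auto intro: vertex_expansion_random_ktree_le\<close>)
  then show "\<exists>C::real. \<forall>\<^sub>F n in sequentially. \<forall>E \<in> set_pmf (random_ktree k n).
      vertex_expansion (ktree_vertices k n) E \<le> C * real k / real n" by blast
  show "\<exists>C::real. (\<lambda>n. measure_pmf.prob (random_ktree k n)
      {E. conductance (ktree_vertices k n) E \<le> C * ln (real n) * real n powr (- 1 / real k)})
      \<longlonglongrightarrow> 1"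
    using prob_conductance_le_tendsto_1[OF assms] by blast
qed

end
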